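(* Let $\pi:(X,T)\to(Y,S)$ be a factor map between minimal systems which is not almost one-to-one, where $(Y,S)$ is invertible ($S$ a homeomorphism). Then $\inf_{y\in Y}\mathrm{diam}(\pi^{-1}(y))>0$. Moreover, if $\pi$ is also proximal, then $(X,T)$ is thickly sensitive.
   Context: Systems: compact metric $(X,\varrho)$ with continuous surjection. Minimal: every orbit dense. Factor map: continuous surjection with $\pi\circ T=S\circ\pi$; almost one-to-one: $\{y:\pi^{-1}(y)\text{ singleton}\}$ is dense in $Y$. Proximal factor map: every pair $x_1,x_2$ with $\pi(x_1)=\pi(x_2)$ satisfies $\liminf_n\varrho(T^nx_1,T^nx_2)=0$. $S_T(U,\delta)=\{n\in\mathbb{N}:\exists x_1,x_2\in U,\ \varrho(T^nx_1,T^nx_2)>\delta\}$; thickly sensitive: there is $\delta>0$ with $S_T(U,\delta)$ thick (containing arbitrarily long blocks of consecutive integers) for every opene $U$. *)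

theory Defs
  imports "HOL-Analysis.Analysis"
begin

definition tds :: "'a::metric_space set \<Rightarrow> ('a \<Rightarrow> 'a) \<Rightarrow> bool" where
  "tds X T \<longleftrightarrow> compact X \<and> X \<noteq> {} \<and> continuous_on X T \<and> T ` X = X"

definition minimal_sys :: "'a::metric_space set \<Rightarrow> ('a \<Rightarrow> 'a) \<Rightarrow> bool" where
  "minimal_sys X T \<longleftrightarrow> tds X T \<and>
     (\<forall>x\<in>X. closure (range (\<lambda>n. (T ^^ n) x)) = X)"

definition factor_map ::
  "'a::metric_space set \<Rightarrow> ('a \<Rightarrow> 'a) \<Rightarrow> 'b::metric_space set \<Rightarrow> ('b \<Rightarrow> 'b) \<Rightarrow> ('a \<Rightarrow> 'b) \<Rightarrow> bool" where
  "factor_map X T Y S p \<longleftrightarrow> continuous_on X p \<and> p ` X = Y \<and> (\<forall>x\<in>X. p (T x) = S (p x))"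

definition almost_one_to_one ::
  "'a::metric_space set \<Rightarrow> 'b::metric_space set \<Rightarrow> ('a \<Rightarrow> 'b) \<Rightarrow> bool" where
  "almost_one_to_one X Y p \<longleftrightarrow>
     Y \<subseteq> closure {y\<in>Y. \<exists>x. {x'\<in>X. p x' = y} = {x}}"

definition proximal_factor ::
  "'a::metric_space set \<Rightarrow> ('a \<Rightarrow> 'a) \<Rightarrow> ('a \<Rightarrow> 'b) \<Rightarrow> bool" where
  "proximal_factor X T p \<longleftrightarrow>
     (\<forall>x1\<in>X. \<forall>x2\<in>X. p x1 = p x2 \<longrightarrow>
        liminf (\<lambda>n. ereal (dist ((T ^^ n) x1) ((T ^^ n) x2))) = 0)"

definition sens_set :: "('a::metric_space \<Rightarrow> 'a) \<Rightarrow> 'a set \<Rightarrow> real \<Rightarrow> nat set" where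
  "sens_set T U \<delta> = {n. \<exists>x1\<in>U. \<exists>x2\<in>U. dist ((T ^^ n) x1) ((T ^^ n) x2) > \<delta>}"

definition thick :: "nat set \<Rightarrow> bool" where
  "thick A \<longleftrightarrow> (\<forall>L. \<exists>m. {m..<m+L} \<subseteq> A)"

definition thickly_sensitive :: "'a::metric_space set \<Rightarrow> ('a \<Rightarrow> 'a) \<Rightarrow> bool" where
  "thickly_sensitive X T \<longleftrightarrow> (\<exists>\<delta>>0. \<forall>U. openin (top_of_set X) U \<and> U \<noteq> {} \<longrightarrow>
      thick (sens_set T U \<delta>))"

end

theory Submission
  imports Defs
begin

text \<open>
  If the fibre diameters had infimum 0, then for every \<open>n\<close> the points whose fibre has all
  pairs closer than \<open>1/(n+1)\<close> would form an open set (fibres vary upper semicontinuously)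
  that is dense: minimality brings a thin fibre near any point in a bounded number \<open>s\<close> of
  steps, injectivity of \<open>S\<close> makes the fibre over \<open>S\<^sup>s z\<close> equal to \<open>T\<^sup>s\<close> of the fibre over \<open>z\<close>,
  and equicontinuity of the first iterates keeps it thin. By Baire, the points with a singleton
  fibre would be dense, i.e. the factor map would be almost one-to-one.

  So every fibre contains two points at distance at least \<open>c > 0\<close>. If the factor is proximal,
  compactness makes any set of \<open>2L\<close> points of one fibre collapse, and then enter a given open
  set \<open>U\<close>, within a bounded time \<open>M\<close>. Choosing, in a single fibre, \<open>L\<close> pairs that are
  \<open>c\<close>-separated at the times \<open>M + i\<close> (\<open>i < L\<close>) and moving all of them into \<open>U\<close> at a time
  \<open>r \<le> M\<close> produces \<open>L\<close> consecutive times of sensitivity, starting at \<open>M - r\<close>.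
\<close>

abbreviation fibre :: "'a set \<Rightarrow> ('a \<Rightarrow> 'b) \<Rightarrow> 'b \<Rightarrow> 'a set" where
  "fibre X p y \<equiv> {x\<in>X. p x = y}"

abbreviation thin_fibre :: "'a::metric_space set \<Rightarrow> ('a \<Rightarrow> 'b) \<Rightarrow> real \<Rightarrow> 'b \<Rightarrow> bool" where
  "thin_fibre X p e y \<equiv> \<forall>a\<in>fibre X p y. \<forall>b\<in>fibre X p y. dist a b < e"

lemma funpow_mem: "T ` X \<subseteq> X \<Longrightarrow> x \<in> X \<Longrightarrow> (T ^^ n) x \<in> X"
  by (induction n) auto

lemma continuous_on_funpow:
  assumes "continuous_on X T" "T ` X \<subseteq> X"
  shows "continuous_on X (T ^^ n)"
proof (induction n)
  case (Suc n)
  have "continuous_on X (T \<circ> (T ^^ n))"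
    by (rule continuous_on_compose[OF Suc continuous_on_subset[OF assms(1)]])
       (use funpow_mem[OF assms(2)] in auto)
  then show ?case by simp
qed (simp add: continuous_on_id)

lemma funpow_semiconj:
  assumes "\<forall>x\<in>X. p (T x) = S (p x)" "T ` X \<subseteq> X" "x \<in> X"
  shows "p ((T ^^ n) x) = (S ^^ n) (p x)"
  using assms funpow_mem[OF assms(2,3)] by (induction n) auto

lemma semiconj_image_subset:
  assumes "p ` X = Y" "\<forall>x\<in>X. p (T x) = S (p x)" "T ` X \<subseteq> X"
  shows "S ` Y \<subseteq> Y"
proof
  fix z assume "z \<in> S ` Y"
  with assms(1) obtain x where "x \<in> X" "z = S (p x)" by blast
  with assms(2) have "z = p (T x)" by simp
  moreover from assms(3) \<open>x \<in> X\<close> have "T x \<in> X" by blast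
  ultimately show "z \<in> Y" using assms(1) by blast
qed

lemma fibre_image:
  assumes "T ` X = X" "\<forall>x\<in>X. p (T x) = S (p x)" "p ` X = Y" "inj_on S Y" "y \<in> Y"
  shows "fibre X p (S y) = T ` fibre X p y"
proof
  show "T ` fibre X p y \<subseteq> fibre X p (S y)"
    using assms(1,2) by auto
  show "fibre X p (S y) \<subseteq> T ` fibre X p y"
  proof
    fix x' assume x': "x' \<in> fibre X p (S y)"
    then obtain x where x: "x \<in> X" "x' = T x"
      using assms(1) by (metis (no_types, lifting) imageE mem_Collect_eq)
    with x' assms(2) have "S (p x) = S y" by simp
    with x(1) assms(3-5) have "p x = y" by (meson imageI inj_onD)
    with x show "x' \<in> T ` fibre X p y" by auto
  qed
qed

lemma fibre_funpow_image:
  assumes "T ` X = X" "\<forall>x\<in>X. p (T x) = S (p x)" "p ` X = Y" "inj_on S Y" "y \<in> Y"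
  shows "fibre X p ((S ^^ n) y) = (T ^^ n) ` fibre X p y"
proof (induction n)
  case (Suc n)
  have "S ` Y \<subseteq> Y"
    using semiconj_image_subset[OF assms(3,2)] assms(1) by simp
  then have "fibre X p ((S ^^ Suc n) y) = T ` fibre X p ((S ^^ n) y)"
    using fibre_image[OF assms(1-4) funpow_mem[OF _ assms(5)]] by simp
  with Suc show ?case by (simp add: image_comp)
qed simp

lemma compact_cover_bounded_index:
  assumes "compact K" "\<And>t::nat. openin (top_of_set K) (V t)" "K \<subseteq> (\<Union>t. V t)"
  shows "\<exists>N. K \<subseteq> (\<Union>t\<le>N. V t)"
proof -
  obtain D where D: "D \<subseteq> range V" "finite D" "K \<subseteq> \<Union>D"
    using assms unfolding compact_eq_openin_cover by (metis rangeE)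
  then obtain I where "finite I" "D = V ` I"
    by (meson finite_subset_image)
  with D(3) show ?thesis
    by (intro exI[of _ "Max I"]) (auto intro: Max_ge)
qed

lemma dense_orbits_uniform_return_time:
  assumes "compact X" "continuous_on X T" "T ` X \<subseteq> X"
    and "\<forall>x\<in>X. closure (range (\<lambda>n. (T ^^ n) x)) = X" "x0 \<in> X" "r > 0"
  shows "\<exists>K. \<forall>x\<in>X. \<exists>s\<le>K. dist ((T ^^ s) x) x0 < r"
proof -
  have "\<exists>K. X \<subseteq> (\<Union>s\<le>K. X \<inter> (T ^^ s) -` ball x0 r)"
  proof (rule compact_cover_bounded_index[OF assms(1)])
    show "openin (top_of_set X) (X \<inter> (T ^^ s) -` ball x0 r)" for s
      by (rule continuous_openin_preimage_gen[OF continuous_on_funpow[OF assms(2,3)] open_ball])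
    show "X \<subseteq> (\<Union>s. X \<inter> (T ^^ s) -` ball x0 r)"
    proof
      fix x assume "x \<in> X"
      with assms(4,5) have "x0 \<in> closure (range (\<lambda>n. (T ^^ n) x))" by simp
      with assms(6) obtain s where "dist ((T ^^ s) x) x0 < r"
        unfolding closure_approachable by blast
      with \<open>x \<in> X\<close> show "x \<in> (\<Union>s. X \<inter> (T ^^ s) -` ball x0 r)"
        by (auto simp: dist_commute)
    qed
  qed
  then obtain K where K: "X \<subseteq> (\<Union>s\<le>K. X \<inter> (T ^^ s) -` ball x0 r)" ..
  show ?thesis
  proof (rule exI[of _ K], intro ballI)
    fix x assume "x \<in> X"
    with K obtain s where "s \<le> K" "(T ^^ s) x \<in> ball x0 r" by blast
    then show "\<exists>s\<le>K. dist ((T ^^ s) x) x0 < r" by (auto simp: dist_commute)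
  qed
qed

lemma uniformly_equicontinuous_funpow_upto:
  assumes "compact X" "continuous_on X T" "T ` X \<subseteq> X" "\<epsilon> > 0"
  shows "\<exists>\<eta>>0. \<forall>x\<in>X. \<forall>x'\<in>X. dist x x' < \<eta> \<longrightarrow> (\<forall>j\<le>K. dist ((T ^^ j) x) ((T ^^ j) x') < \<epsilon>)"
proof (induction K)
  case 0
  show ?case by (rule exI[of _ \<epsilon>]) (use assms(4) in auto)
next
  case (Suc K)
  then obtain \<eta>1 where \<eta>1: "\<eta>1 > 0"
    "\<forall>x\<in>X. \<forall>x'\<in>X. dist x x' < \<eta>1 \<longrightarrow> (\<forall>j\<le>K. dist ((T ^^ j) x) ((T ^^ j) x') < \<epsilon>)"
    by blast
  have "uniformly_continuous_on X (T ^^ Suc K)"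
    by (rule compact_uniformly_continuous[OF continuous_on_funpow[OF assms(2,3)] assms(1)])
  then obtain \<eta>2 where \<eta>2: "\<eta>2 > 0"
    "\<forall>x\<in>X. \<forall>x'\<in>X. dist x x' < \<eta>2 \<longrightarrow> dist ((T ^^ Suc K) x) ((T ^^ Suc K) x') < \<epsilon>"
    unfolding uniformly_continuous_on_def using assms(4) by blast
  show ?case
  proof (rule exI[of _ "min \<eta>1 \<eta>2"], intro conjI ballI impI allI)
    fix x x' j assume x: "x \<in> X" "x' \<in> X" "dist x x' < min \<eta>1 \<eta>2" and "j \<le> Suc K"
    then consider "j \<le> K" | "j = Suc K" by linarith
    then show "dist ((T ^^ j) x) ((T ^^ j) x') < \<epsilon>"
    proof cases
      case 1
      from x(3) have "dist x x' < \<eta>1" by simp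
      with x(1,2) \<eta>1(2) 1 show ?thesis by blast
    next
      case 2
      from x(3) have "dist x x' < \<eta>2" by simp
      with x(1,2) \<eta>2(2) show ?thesis unfolding 2 by blast
    qed
  qed (use \<eta>1 \<eta>2 in simp)
qed

lemma continuous_on_dist_pair:
  assumes "continuous_on X f"
  shows "continuous_on (X \<times> X) (\<lambda>z. dist (f (fst z)) (f (snd z)))"
proof -
  have "continuous_on (X \<times> X) (\<lambda>z. f (fst z))"
    by (rule continuous_on_compose2[OF assms continuous_on_fst[OF continuous_on_id]]) auto
  moreover have "continuous_on (X \<times> X) (\<lambda>z. f (snd z))"
    by (rule continuous_on_compose2[OF assms continuous_on_snd[OF continuous_on_id]]) auto
  ultimately show ?thesis by (rule continuous_on_dist)
qed

lemma compact_fibre_pairs: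
  fixes p :: "'a::metric_space \<Rightarrow> 'b::metric_space"
  assumes "compact X" "continuous_on X p"
  shows "compact {z \<in> X \<times> X. p (fst z) = p (snd z)}"
proof -
  have "closed {z \<in> X \<times> X. dist (p (fst z)) (p (snd z)) = 0}"
    using assms
    by (intro continuous_closed_preimage_constant continuous_on_dist_pair closed_Times
        compact_imp_closed)
  then have "compact (X \<times> X \<inter> {z \<in> X \<times> X. dist (p (fst z)) (p (snd z)) = 0})"
    using compact_Int_closed[OF compact_Times[OF assms(1,1)]] by blast
  then show ?thesis by (simp add: Int_absorb1)
qed

lemma proximal_factor_uniform_time:
  fixes p :: "'a::metric_space \<Rightarrow> 'b::metric_space"
  assumes "compact X" "continuous_on X T" "T ` X \<subseteq> X" "continuous_on X p"
    and "proximal_factor X T p" "\<epsilon> > 0"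
  shows "\<exists>N. \<forall>a\<in>X. \<forall>b\<in>X. p a = p b \<longrightarrow> (\<exists>t\<le>N. dist ((T ^^ t) a) ((T ^^ t) b) < \<epsilon>)"
proof -
  define R where "R = {z \<in> X \<times> X. p (fst z) = p (snd z)}"
  define V where "V t = R \<inter> (\<lambda>z. dist ((T ^^ t) (fst z)) ((T ^^ t) (snd z))) -` {..<\<epsilon>}" for t
  have "\<exists>N. R \<subseteq> (\<Union>t\<le>N. V t)"
  proof (rule compact_cover_bounded_index)
    show "compact R"
      unfolding R_def by (rule compact_fibre_pairs[OF assms(1,4)])
    show "openin (top_of_set R) (V t)" for t
    proof -
      have cont: "continuous_on (X \<times> X) (\<lambda>z. dist ((T ^^ t) (fst z)) ((T ^^ t) (snd z)))"
        by (rule continuous_on_dist_pair[OF continuous_on_funpow[OF assms(2,3)]])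
      show ?thesis
        unfolding V_def
        by (intro continuous_openin_preimage_gen open_lessThan continuous_on_subset[OF cont])
          (auto simp: R_def)
    qed
    show "R \<subseteq> (\<Union>t. V t)"
    proof
      fix z assume "z \<in> R"
      then have z: "fst z \<in> X" "snd z \<in> X" "p (fst z) = p (snd z)"
        by (auto simp: R_def mem_Times_iff)
      show "z \<in> (\<Union>t. V t)"
      proof (rule ccontr)
        assume "z \<notin> (\<Union>t. V t)"
        with \<open>z \<in> R\<close> have "\<forall>t. \<epsilon> \<le> dist ((T ^^ t) (fst z)) ((T ^^ t) (snd z))"
          by (auto simp: V_def not_less)
        then have "ereal \<epsilon> \<le> liminf (\<lambda>t. ereal (dist ((T ^^ t) (fst z)) ((T ^^ t) (snd z))))"
          by (intro Liminf_bounded always_eventually) simp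
        moreover have "liminf (\<lambda>t. ereal (dist ((T ^^ t) (fst z)) ((T ^^ t) (snd z)))) = 0"
          using assms(5) z unfolding proximal_factor_def by blast
        ultimately show False using assms(6) by simp
      qed
    qed
  qed
  then obtain N where N: "R \<subseteq> (\<Union>t\<le>N. V t)" ..
  show ?thesis
  proof (rule exI[of _ N], intro ballI impI)
    fix a b assume "a \<in> X" "b \<in> X" "p a = p b"
    then have "(a, b) \<in> R" by (simp add: R_def)
    with N obtain t where "t \<le> N" "(a, b) \<in> V t" by blast
    then show "\<exists>t\<le>N. dist ((T ^^ t) a) ((T ^^ t) b) < \<epsilon>" by (auto simp: V_def)
  qed
qed

lemma openin_thin_fibres:
  fixes p :: "'a::metric_space \<Rightarrow> 'b::metric_space"
  assumes "compact X" "continuous_on X p" "p ` X = Y"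
  shows "openin (top_of_set Y) {y \<in> Y. thin_fibre X p e y}"
proof -
  \<comment> \<open>The complement is the projection of the compact set of \<open>e\<close>-separated pairs in a common fibre.\<close>
  define C where "C = {z \<in> X \<times> X. p (fst z) = p (snd z)} \<inter> {z. e \<le> dist (fst z) (snd z)}"
  have "closed {z. e \<le> dist (fst z) (snd z)}"
    by (intro closed_Collect_le continuous_on_const continuous_on_dist continuous_on_fst
        continuous_on_snd continuous_on_id)
  then have "compact C"
    unfolding C_def by (rule compact_Int_closed[OF compact_fibre_pairs[OF assms(1,2)]])
  moreover have "continuous_on C (p \<circ> fst)"
    by (rule continuous_on_compose[OF continuous_on_fst[OF continuous_on_id]
          continuous_on_subset[OF assms(2)]]) (auto simp: C_def)
  ultimately have "compact ((p \<circ> fst) ` C)"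
    by (rule compact_continuous_image[rotated])
  then have "closedin euclidean ((p \<circ> fst) ` C)"
    by (rule closed_closedin[THEN iffD1, OF compact_imp_closed])
  then have "openin (top_of_set Y) (Y - (p \<circ> fst) ` C)"
    by (rule openin_subtopology_diff_closed[rotated]) simp
  moreover have "{y \<in> Y. thin_fibre X p e y} = Y - (p \<circ> fst) ` C"
  proof (intro equalityI subsetI)
    fix y assume y: "y \<in> {y \<in> Y. thin_fibre X p e y}"
    have "p (fst z) \<noteq> y" if "z \<in> C" for z
      using that y by (fastforce simp: C_def)
    with y show "y \<in> Y - (p \<circ> fst) ` C" by auto
  next
    fix y assume y: "y \<in> Y - (p \<circ> fst) ` C"
    have "dist a b < e" if ab: "a \<in> fibre X p y" "b \<in> fibre X p y" for a b
    proof (rule ccontr)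
      assume "\<not> dist a b < e"
      with ab have "(a, b) \<in> C" by (auto simp: C_def)
      moreover from ab have "y = (p \<circ> fst) (a, b)" by simp
      ultimately have "y \<in> (p \<circ> fst) ` C" by (rule rev_image_eqI)
      with y show False by blast
    qed
    with y show "y \<in> {y \<in> Y. thin_fibre X p e y}" by blast
  qed
  ultimately show ?thesis by simp
qed

lemma dense_thin_fibres:
  fixes p :: "'a::metric_space \<Rightarrow> 'b::metric_space"
  assumes "minimal_sys X T" "minimal_sys Y S" "factor_map X T Y S p" "inj_on S Y"
    and thin: "\<forall>\<eta>>0. \<exists>z\<in>Y. thin_fibre X p \<eta> z"
    and "e > 0"
  shows "Y \<subseteq> closure {y \<in> Y. thin_fibre X p e y}"
proof
  have X: "compact X" "continuous_on X T" "T ` X = X"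
    using assms(1) unfolding minimal_sys_def tds_def by auto
  have Y: "compact Y" "continuous_on Y S" "S ` Y \<subseteq> Y"
    "\<forall>y\<in>Y. closure (range (\<lambda>n. (S ^^ n) y)) = Y"
    using assms(2) unfolding minimal_sys_def tds_def by auto
  have p: "p ` X = Y" "\<forall>x\<in>X. p (T x) = S (p x)"
    using assms(3) unfolding factor_map_def by auto
  fix y assume "y \<in> Y"
  show "y \<in> closure {y \<in> Y. thin_fibre X p e y}"
    unfolding closure_approachable
  proof (intro allI impI)
    fix \<epsilon> :: real assume "\<epsilon> > 0"
    with dense_orbits_uniform_return_time[OF Y \<open>y \<in> Y\<close>] obtain K
      where K: "\<forall>z\<in>Y. \<exists>s\<le>K. dist ((S ^^ s) z) y < \<epsilon>" by blast
    obtain \<eta> where \<eta>: "\<eta> > 0"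
      "\<forall>x\<in>X. \<forall>x'\<in>X. dist x x' < \<eta> \<longrightarrow> (\<forall>j\<le>K. dist ((T ^^ j) x) ((T ^^ j) x') < e)"
      using uniformly_equicontinuous_funpow_upto[OF X(1,2) _ assms(6)] X(3) by blast
    obtain z where z: "z \<in> Y" "thin_fibre X p \<eta> z"
      using thin \<eta>(1) by blast
    with K obtain s where s: "s \<le> K" "dist ((S ^^ s) z) y < \<epsilon>" by blast
    have "thin_fibre X p e ((S ^^ s) z)"
      unfolding fibre_funpow_image[OF X(3) p(2,1) assms(4) z(1)] using z(2) \<eta>(2) s(1) by auto
    moreover have "(S ^^ s) z \<in> Y" using funpow_mem[OF Y(3) z(1)] .
    ultimately show "\<exists>y'\<in>{y \<in> Y. thin_fibre X p e y}. dist y' y < \<epsilon>"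
      using s(2) by blast
  qed
qed

lemma compact_Baire:
  fixes Y :: "'a::metric_space set"
  assumes "compact Y" "\<And>n::nat. openin (top_of_set Y) (D n)" "\<And>n. Y \<subseteq> closure (D n)"
  shows "Y \<subseteq> closure (\<Inter>n. D n)"
proof -
  have D: "D n \<subseteq> Y" for n using openin_imp_subset[OF assms(2)] .
  have "top_of_set Y closure_of (\<Inter>n. D n) = topspace (top_of_set Y)"
  proof (rule Baire_category)
    have "locally_compact_space (top_of_set Y)"
      by (rule compact_imp_locally_compact_space[OF compact_space_subtopology]) (simp add: assms(1))
    moreover have "regular_space (top_of_set Y)"
      by (rule metrizable_imp_regular_space[OF metrizable_space_subtopology[OF metrizable_space_euclidean]])
    ultimately show "completely_metrizable_space (top_of_set Y) \<or>
        locally_compact_space (top_of_set Y) \<and> regular_space (top_of_set Y)" by blast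
    show "openin (top_of_set Y) U \<and> top_of_set Y closure_of U = topspace (top_of_set Y)"
      if "U \<in> range D" for U
    proof -
      from that obtain n where n: "U = D n" by blast
      have "top_of_set Y closure_of D n = Y \<inter> closure (D n)"
        by (simp add: closure_of_subtopology Int_absorb1[OF D])
      with assms(2,3)[of n] n show ?thesis by auto
    qed
  qed auto
  moreover have "(\<Inter>n. D n) \<subseteq> Y" using D by blast
  ultimately have "Y \<inter> closure (\<Inter>n. D n) = Y"
    by (simp add: closure_of_subtopology Int_absorb1)
  then show ?thesis by blast
qed

lemma almost_one_to_one_if_thin_fibres:
  fixes p :: "'a::metric_space \<Rightarrow> 'b::metric_space"
  assumes "minimal_sys X T" "minimal_sys Y S" "factor_map X T Y S p" "inj_on S Y"
    and thin: "\<forall>\<eta>>0. \<exists>z\<in>Y. thin_fibre X p \<eta> z"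
  shows "almost_one_to_one X Y p"
proof -
  have "compact X" "compact Y" using assms(1,2) unfolding minimal_sys_def tds_def by auto
  have p: "continuous_on X p" "p ` X = Y" using assms(3) unfolding factor_map_def by auto
  define D where
    "D n = {y \<in> Y. thin_fibre X p (inverse (Suc n)) y}" for n
  have dense: "Y \<subseteq> closure (\<Inter>n. D n)"
  proof (rule compact_Baire[OF \<open>compact Y\<close>])
    show "openin (top_of_set Y) (D n)" for n
      unfolding D_def by (rule openin_thin_fibres[OF \<open>compact X\<close> p])
    show "Y \<subseteq> closure (D n)" for n
      unfolding D_def by (rule dense_thin_fibres[OF assms]) simp
  qed
  have singletons: "(\<Inter>n. D n) \<subseteq> {y \<in> Y. \<exists>x. fibre X p y = {x}}"
  proof
    fix y assume y: "y \<in> (\<Inter>n. D n)"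
    then have "y \<in> Y" by (auto simp: D_def)
    with p(2) have "y \<in> p ` X" by simp
    then obtain x where x: "x \<in> fibre X p y" by auto
    have "x' = x" if "x' \<in> fibre X p y" for x'
    proof (rule ccontr)
      assume "x' \<noteq> x"
      then obtain n where "inverse (real (Suc n)) < dist x' x"
        using reals_Archimedean[of "dist x' x"] by auto
      moreover have "dist x' x < inverse (Suc n)"
        using y x that by (auto simp: D_def)
      ultimately show False by simp
    qed
    with x \<open>y \<in> Y\<close> show "y \<in> {y \<in> Y. \<exists>x. fibre X p y = {x}}" by blast
  qed
  from dense closure_mono[OF singletons] show ?thesis
    unfolding almost_one_to_one_def by (rule order_trans)
qed

lemma absorb_point_uniform_time:
  assumes "T ` X \<subseteq> X" "\<forall>x\<in>X. p (T x) = S (p x)"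
    and pairs: "\<forall>a\<in>X. \<forall>b\<in>X. p a = p b \<longrightarrow> (\<exists>t\<le>N2. dist ((T ^^ t) a) ((T ^^ t) b) < \<epsilon>/2)"
    and equi: "\<forall>x\<in>X. \<forall>x'\<in>X. dist x x' < \<eta> \<longrightarrow> (\<forall>j\<le>N2. dist ((T ^^ j) x) ((T ^^ j) x') < \<epsilon>/2)"
    and A: "A \<subseteq> fibre X p y" "a0 \<in> A"
    and t1: "t1 \<le> N1" "\<forall>a\<in>A - {a0}. \<forall>b\<in>A - {a0}. dist ((T ^^ t1) a) ((T ^^ t1) b) < \<eta>"
  shows "\<exists>t\<le>N2 + N1. \<forall>a\<in>A. \<forall>b\<in>A. dist ((T ^^ t) a) ((T ^^ t) b) < \<epsilon>"
proof -
  \<comment> \<open>An anchor in \<open>A - {a0}\<close> (or \<open>a0\<close> itself if that is empty); \<open>a0\<close> is then synchronised with it.\<close>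
  obtain a1 where a1: "a1 \<in> A" "\<forall>a\<in>A - {a0}. dist ((T ^^ t1) a) ((T ^^ t1) a1) < \<eta>"
    using t1(2) A(2) by (cases "A - {a0} = {}") blast+
  have X01: "(T ^^ t1) a0 \<in> X" "(T ^^ t1) a1 \<in> X"
    using A a1(1) funpow_mem[OF assms(1)] by auto
  have "a0 \<in> X" "a1 \<in> X" "p a0 = p a1" using A a1(1) by auto
  then have "p ((T ^^ t1) a0) = p ((T ^^ t1) a1)"
    using funpow_semiconj[OF assms(2,1)] by simp
  with pairs X01 obtain t2 where t2: "t2 \<le> N2"
    "dist ((T ^^ t2) ((T ^^ t1) a0)) ((T ^^ t2) ((T ^^ t1) a1)) < \<epsilon>/2"
    by blast
  have near_a1: "dist ((T ^^ (t2 + t1)) a) ((T ^^ (t2 + t1)) a1) < \<epsilon>/2" if "a \<in> A" for a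
  proof (cases "a = a0")
    case False
    with that a1(2) have "dist ((T ^^ t1) a) ((T ^^ t1) a1) < \<eta>" by blast
    moreover have "(T ^^ t1) a \<in> X" using that A(1) funpow_mem[OF assms(1)] by auto
    ultimately show ?thesis
      using equi X01(2) t2(1) by (simp add: funpow_add)
  qed (use t2 in \<open>simp add: funpow_add\<close>)
  have "dist ((T ^^ (t2 + t1)) a) ((T ^^ (t2 + t1)) b) < \<epsilon>" if "a \<in> A" "b \<in> A" for a b
    using near_a1[OF that(1)] near_a1[OF that(2)] by (rule dist_triangle_half_l)
  with t1(1) t2(1) show ?thesis
    by (intro exI[of _ "t2 + t1"]) auto
qed

lemma proximal_factor_uniform_time_finite:
  fixes p :: "'a::metric_space \<Rightarrow> 'b::metric_space"
  assumes "compact X" "continuous_on X T" "T ` X \<subseteq> X" "continuous_on X p"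
    and "\<forall>x\<in>X. p (T x) = S (p x)" "proximal_factor X T p" "\<epsilon> > 0"
  shows "\<exists>N. \<forall>y A. A \<subseteq> fibre X p y \<longrightarrow> finite A \<longrightarrow> card A \<le> k \<longrightarrow>
           (\<exists>t\<le>N. \<forall>a\<in>A. \<forall>b\<in>A. dist ((T ^^ t) a) ((T ^^ t) b) < \<epsilon>)"
  using assms(7)
proof (induction k arbitrary: \<epsilon>)
  case 0
  show ?case by (rule exI[of _ 0]) auto
next
  case (Suc k)
  then have "\<epsilon>/2 > 0" by simp
  then obtain N2 where pairs:
    "\<forall>a\<in>X. \<forall>b\<in>X. p a = p b \<longrightarrow> (\<exists>t\<le>N2. dist ((T ^^ t) a) ((T ^^ t) b) < \<epsilon>/2)"
    using proximal_factor_uniform_time[OF assms(1-4,6)] by blast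
  obtain \<eta> where \<eta>: "\<eta> > 0"
    "\<forall>x\<in>X. \<forall>x'\<in>X. dist x x' < \<eta> \<longrightarrow> (\<forall>j\<le>N2. dist ((T ^^ j) x) ((T ^^ j) x') < \<epsilon>/2)"
    using uniformly_equicontinuous_funpow_upto[OF assms(1-3) \<open>\<epsilon>/2 > 0\<close>] by blast
  obtain N1 where N1: "\<forall>y A. A \<subseteq> fibre X p y \<longrightarrow> finite A \<longrightarrow> card A \<le> k \<longrightarrow>
      (\<exists>t\<le>N1. \<forall>a\<in>A. \<forall>b\<in>A. dist ((T ^^ t) a) ((T ^^ t) b) < \<eta>)"
    using Suc.IH[OF \<eta>(1)] by blast
  show ?case
  proof (rule exI[of _ "N2 + N1"], intro allI impI)
    fix y A assume A: "A \<subseteq> fibre X p y" "finite A" "card A \<le> Suc k"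
    show "\<exists>t\<le>N2 + N1. \<forall>a\<in>A. \<forall>b\<in>A. dist ((T ^^ t) a) ((T ^^ t) b) < \<epsilon>"
    proof (cases "A = {}")
      case True
      then show ?thesis by (intro exI[of _ 0]) simp
    next
      case False
      then obtain a0 where "a0 \<in> A" by blast
      with A have "A - {a0} \<subseteq> fibre X p y" "finite (A - {a0})" "card (A - {a0}) \<le> k"
        by auto
      with N1 obtain t1 where "t1 \<le> N1"
        "\<forall>a\<in>A - {a0}. \<forall>b\<in>A - {a0}. dist ((T ^^ t1) a) ((T ^^ t1) b) < \<eta>"
        by blast
      with absorb_point_uniform_time[OF assms(3,5) pairs \<eta>(2) A(1) \<open>a0 \<in> A\<close>]
      show ?thesis by blast
    qed
  qed
qed

lemma proximal_factor_uniform_entry_time: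
  fixes p :: "'a::metric_space \<Rightarrow> 'b::metric_space"
  assumes "minimal_sys X T" "continuous_on X p" "\<forall>x\<in>X. p (T x) = S (p x)"
    and "proximal_factor X T p" "x0 \<in> X" "\<rho> > 0"
  shows "\<exists>M. \<forall>y A. A \<subseteq> fibre X p y \<longrightarrow> finite A \<longrightarrow> card A \<le> k \<longrightarrow> A \<noteq> {} \<longrightarrow>
           (\<exists>r\<le>M. \<forall>a\<in>A. dist ((T ^^ r) a) x0 < \<rho>)"
proof -
  have X: "compact X" "continuous_on X T" "T ` X \<subseteq> X"
    "\<forall>x\<in>X. closure (range (\<lambda>n. (T ^^ n) x)) = X"
    using assms(1) unfolding minimal_sys_def tds_def by auto
  have "\<rho>/2 > 0" using assms(6) by simp
  then obtain K where K: "\<forall>x\<in>X. \<exists>s\<le>K. dist ((T ^^ s) x) x0 < \<rho>/2"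
    using dense_orbits_uniform_return_time[OF X assms(5)] by blast
  obtain \<eta> where \<eta>: "\<eta> > 0"
    "\<forall>x\<in>X. \<forall>x'\<in>X. dist x x' < \<eta> \<longrightarrow> (\<forall>j\<le>K. dist ((T ^^ j) x) ((T ^^ j) x') < \<rho>/2)"
    using uniformly_equicontinuous_funpow_upto[OF X(1-3) \<open>\<rho>/2 > 0\<close>] by blast
  obtain N where N: "\<forall>y A. A \<subseteq> fibre X p y \<longrightarrow> finite A \<longrightarrow> card A \<le> k \<longrightarrow>
      (\<exists>t\<le>N. \<forall>a\<in>A. \<forall>b\<in>A. dist ((T ^^ t) a) ((T ^^ t) b) < \<eta>)"
    using proximal_factor_uniform_time_finite[OF X(1-3) assms(2-4) \<eta>(1)] by blast
  show ?thesis
  proof (rule exI[of _ "K + N"], intro allI impI)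
    fix y A assume A: "A \<subseteq> fibre X p y" "finite A" "card A \<le> k" "A \<noteq> {}"
    with N obtain t where t: "t \<le> N" "\<forall>a\<in>A. \<forall>b\<in>A. dist ((T ^^ t) a) ((T ^^ t) b) < \<eta>"
      by blast
    from A obtain a0 where "a0 \<in> A" by blast
    with A(1) have a0: "(T ^^ t) a0 \<in> X" using funpow_mem[OF X(3)] by blast
    with K obtain s where s: "s \<le> K" "dist ((T ^^ s) ((T ^^ t) a0)) x0 < \<rho>/2" by blast
    have "dist ((T ^^ (s + t)) a) x0 < \<rho>" if "a \<in> A" for a
    proof -
      have "(T ^^ t) a \<in> X" using that A(1) funpow_mem[OF X(3)] by blast
      with \<eta>(2) a0 s(1) t(2) that \<open>a0 \<in> A\<close>
      have "dist ((T ^^ s) ((T ^^ t) a)) ((T ^^ s) ((T ^^ t) a0)) < \<rho>/2" by blast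
      with s(2) have "dist ((T ^^ s) ((T ^^ t) a)) x0 < \<rho>"
        using dist_triangle[of "(T ^^ s) ((T ^^ t) a)" x0 "(T ^^ s) ((T ^^ t) a0)"] by linarith
      then show ?thesis by (simp add: funpow_add)
    qed
    with s(1) t(1) show "\<exists>r\<le>K + N. \<forall>a\<in>A. dist ((T ^^ r) a) x0 < \<rho>"
      by (intro exI[of _ "s + t"]) auto
  qed
qed

lemma not_thin_fibre_funpow:
  assumes "T ` X = X" "\<forall>x\<in>X. p (T x) = S (p x)" "p ` X = Y" "inj_on S Y" "y \<in> Y"
    and wide: "\<forall>y\<in>Y. \<not> thin_fibre X p c y"
  shows "\<exists>a\<in>fibre X p y. \<exists>b\<in>fibre X p y. c \<le> dist ((T ^^ n) a) ((T ^^ n) b)"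
proof -
  have "(S ^^ n) y \<in> Y"
    using funpow_mem[OF semiconj_image_subset[OF assms(3,2)] assms(5)] assms(1) by simp
  with wide obtain u v where "u \<in> fibre X p ((S ^^ n) y)" "v \<in> fibre X p ((S ^^ n) y)" "c \<le> dist u v"
    by (auto simp: not_less)
  then show ?thesis
    unfolding fibre_funpow_image[OF assms(1-5)] by blast
qed

lemma wide_pairs_in_fibre:
  assumes "T ` X = X" "\<forall>x\<in>X. p (T x) = S (p x)" "p ` X = Y" "inj_on S Y" "y \<in> Y"
    and wide: "\<forall>y\<in>Y. \<not> thin_fibre X p c y"
  shows "\<exists>A. A \<subseteq> fibre X p y \<and> finite A \<and> card A \<le> 2 * L \<and>
           (\<forall>i<L. \<exists>a\<in>A. \<exists>b\<in>A. c \<le> dist ((T ^^ (i + M)) a) ((T ^^ (i + M)) b))"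
proof -
  have "\<forall>i\<in>{..<L}. \<exists>ab. ab \<in> fibre X p y \<times> fibre X p y \<and>
      c \<le> dist ((T ^^ (i + M)) (fst ab)) ((T ^^ (i + M)) (snd ab))"
    using not_thin_fibre_funpow[OF assms] by fastforce
  then have "\<exists>f. \<forall>i\<in>{..<L}. f i \<in> fibre X p y \<times> fibre X p y \<and>
      c \<le> dist ((T ^^ (i + M)) (fst (f i))) ((T ^^ (i + M)) (snd (f i)))"
    by (rule bchoice)
  then obtain f where f: "\<forall>i\<in>{..<L}. f i \<in> fibre X p y \<times> fibre X p y \<and>
      c \<le> dist ((T ^^ (i + M)) (fst (f i))) ((T ^^ (i + M)) (snd (f i)))" ..
  define A where "A = fst ` f ` {..<L} \<union> snd ` f ` {..<L}"
  have "card A \<le> card (fst ` f ` {..<L}) + card (snd ` f ` {..<L})"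
    unfolding A_def by (rule card_Un_le)
  also have "\<dots> \<le> card {..<L} + card {..<L}"
    by (intro add_mono card_image_le[THEN order_trans] card_image_le) auto
  finally have "card A \<le> 2 * L" by simp
  moreover have "A \<subseteq> fibre X p y" using f by (auto simp: A_def mem_Times_iff)
  moreover have "finite A" by (simp add: A_def)
  moreover have "\<forall>i<L. \<exists>a\<in>A. \<exists>b\<in>A. c \<le> dist ((T ^^ (i + M)) a) ((T ^^ (i + M)) b)"
    using f unfolding A_def by blast
  ultimately show ?thesis by blast
qed

lemma sens_set_block_if_proximal_not_thin:
  fixes p :: "'a::metric_space \<Rightarrow> 'b::metric_space"
  assumes "minimal_sys X T" "factor_map X T Y S p" "inj_on S Y" "proximal_factor X T p" "c > 0"
    and wide: "\<forall>y\<in>Y. \<not> thin_fibre X p c y"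
    and U: "openin (top_of_set X) U" "U \<noteq> {}" and "L > 0"
  shows "\<exists>m. {m..<m + L} \<subseteq> sens_set T U (c/2)"
proof -
  have X: "X \<noteq> {}" "T ` X = X"
    using assms(1) unfolding minimal_sys_def tds_def by auto
  have p: "continuous_on X p" "p ` X = Y" "\<forall>x\<in>X. p (T x) = S (p x)"
    using assms(2) unfolding factor_map_def by auto
  obtain y where "y \<in> Y" using X(1) p(2) by blast
  from U obtain x0 \<rho> where x0: "x0 \<in> U" "\<rho> > 0" "\<forall>x\<in>X. dist x x0 < \<rho> \<longrightarrow> x \<in> U"
    unfolding openin_euclidean_subtopology_iff by blast
  with U(1) have "x0 \<in> X" by (meson openin_imp_subset subsetD)
  obtain M where M: "\<forall>y A. A \<subseteq> fibre X p y \<longrightarrow> finite A \<longrightarrow> card A \<le> 2 * L \<longrightarrow> A \<noteq> {} \<longrightarrow>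
      (\<exists>r\<le>M. \<forall>a\<in>A. dist ((T ^^ r) a) x0 < \<rho>)"
    using proximal_factor_uniform_entry_time[OF assms(1) p(1,3) assms(4) \<open>x0 \<in> X\<close> x0(2)] by blast
  obtain A where A: "A \<subseteq> fibre X p y" "finite A" "card A \<le> 2 * L"
    and pairs: "\<forall>i<L. \<exists>a\<in>A. \<exists>b\<in>A. c \<le> dist ((T ^^ (i + M)) a) ((T ^^ (i + M)) b)"
    using wide_pairs_in_fibre[OF X(2) p(3,2) assms(3) \<open>y \<in> Y\<close> wide, where L = L and M = M]
    by blast
  from pairs \<open>L > 0\<close> have "A \<noteq> {}" by blast
  with A M obtain r where r: "r \<le> M" "\<forall>a\<in>A. dist ((T ^^ r) a) x0 < \<rho>" by blast
  have inU: "(T ^^ r) a \<in> U" if "a \<in> A" for a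
  proof -
    from that A(1) have "a \<in> X" by blast
    with X(2) have "(T ^^ r) a \<in> X" using funpow_mem[of T X] by simp
    with x0(3) r(2) that show ?thesis by blast
  qed
  show ?thesis
  proof (rule exI[of _ "M - r"], rule subsetI)
    fix j assume "j \<in> {M - r..<M - r + L}"
    with r(1) obtain i where i: "i < L" "j + r = i + M"
      by (intro that[of "j - (M - r)"]) auto
    then have shift: "(T ^^ j) ((T ^^ r) a) = (T ^^ (i + M)) a" for a
      unfolding i(2)[symmetric] by (simp add: funpow_add)
    from pairs i(1) obtain a b where ab: "a \<in> A" "b \<in> A"
      "c \<le> dist ((T ^^ (i + M)) a) ((T ^^ (i + M)) b)"
      by blast
    with assms(5) have "c/2 < dist ((T ^^ j) ((T ^^ r) a)) ((T ^^ j) ((T ^^ r) b))"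
      unfolding shift by simp
    with ab(1,2) inU show "j \<in> sens_set T U (c/2)"
      unfolding sens_set_def by blast
  qed
qed

lemma thickly_sensitive_if_proximal_not_thin:
  fixes p :: "'a::metric_space \<Rightarrow> 'b::metric_space"
  assumes "minimal_sys X T" "factor_map X T Y S p" "inj_on S Y" "proximal_factor X T p" "c > 0"
    and "\<forall>y\<in>Y. \<not> thin_fibre X p c y"
  shows "thickly_sensitive X T"
proof -
  have "thick (sens_set T U (c/2))" if "openin (top_of_set X) U" "U \<noteq> {}" for U
    unfolding thick_def
  proof
    fix L
    show "\<exists>m. {m..<m + L} \<subseteq> sens_set T U (c/2)"
      using sens_set_block_if_proximal_not_thin[OF assms that] by (cases "L = 0") simp_all
  qed
  with assms(5) show ?thesis
    unfolding thickly_sensitive_def by (intro exI[of _ "c/2"]) auto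
qed

lemma compact_fibre:
  fixes p :: "'a::metric_space \<Rightarrow> 'b::metric_space"
  assumes "compact X" "continuous_on X p"
  shows "compact (fibre X p y)"
proof -
  have "closed (fibre X p y)"
    by (rule continuous_closed_preimage_constant[OF assms(2) compact_imp_closed[OF assms(1)]])
  with assms(1) have "compact (X \<inter> fibre X p y)" by (rule compact_Int_closed)
  then show ?thesis by (simp add: Int_absorb1)
qed

lemma bdd_below_fibre_diameters:
  fixes p :: "'a::metric_space \<Rightarrow> 'b::metric_space"
  assumes "compact X" "continuous_on X p"
  shows "bdd_below ((\<lambda>y. diameter (fibre X p y)) ` Y)"
  using diameter_ge_0[OF compact_imp_bounded[OF compact_fibre[OF assms]]]
  by (intro bdd_belowI[of _ 0]) auto

lemma thin_fibres_if_INF_diameter_nonpos: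
  fixes p :: "'a::metric_space \<Rightarrow> 'b::metric_space"
  assumes "compact X" "continuous_on X p" "Y \<noteq> {}"
    and "(INF y\<in>Y. diameter (fibre X p y)) \<le> 0"
  shows "\<forall>\<eta>>0. \<exists>z\<in>Y. thin_fibre X p \<eta> z"
proof (intro allI impI)
  fix \<eta> :: real assume "\<eta> > 0"
  with assms(4) have "(INF y\<in>Y. diameter (fibre X p y)) < \<eta>" by linarith
  then obtain z where z: "z \<in> Y" "diameter (fibre X p z) < \<eta>"
    by (subst (asm) cINF_less_iff[OF assms(3) bdd_below_fibre_diameters[OF assms(1,2)]]) blast
  have "dist a b \<le> diameter (fibre X p z)" if "a \<in> fibre X p z" "b \<in> fibre X p z" for a b
    by (rule diameter_bounded_bound[OF compact_imp_bounded[OF compact_fibre[OF assms(1,2)]] that])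
  with z show "\<exists>z\<in>Y. thin_fibre X p \<eta> z"
    by (meson le_less_trans)
qed

lemma not_thin_fibre_INF_diameter:
  fixes p :: "'a::metric_space \<Rightarrow> 'b::metric_space"
  assumes "compact X" "continuous_on X p" "p ` X = Y" "y \<in> Y"
  shows "\<not> thin_fibre X p (INF y\<in>Y. diameter (fibre X p y)) y"
proof -
  from assms(3,4) have "fibre X p y \<noteq> {}" by auto
  then obtain a b where ab: "a \<in> fibre X p y" "b \<in> fibre X p y" "dist a b = diameter (fibre X p y)"
    using diameter_compact_attained[OF compact_fibre[OF assms(1,2)]] by blast
  have "(INF y\<in>Y. diameter (fibre X p y)) \<le> diameter (fibre X p y)"
    by (rule cINF_lower[OF bdd_below_fibre_diameters[OF assms(1,2)] assms(4)])
  with ab(3) have "(INF y\<in>Y. diameter (fibre X p y)) \<le> dist a b" by simp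
  with ab(1,2) show ?thesis by (auto simp: not_less)
qed

theorem proposition4p4:
  fixes X :: "'a::metric_space set" and T :: "'a \<Rightarrow> 'a"
    and Y :: "'b::metric_space set" and S :: "'b \<Rightarrow> 'b" and p :: "'a \<Rightarrow> 'b"
  assumes "minimal_sys X T" and "minimal_sys Y S"
    and "factor_map X T Y S p"
    and "\<not> almost_one_to_one X Y p"
    and "inj_on S Y"
  shows "(INF y\<in>Y. diameter {x\<in>X. p x = y}) > 0 \<and>
         (proximal_factor X T p \<longrightarrow> thickly_sensitive X T)"
proof
  have X: "compact X" "X \<noteq> {}" using assms(1) unfolding minimal_sys_def tds_def by auto
  have p: "continuous_on X p" "p ` X = Y" using assms(3) unfolding factor_map_def by auto
  show pos: "(INF y\<in>Y. diameter (fibre X p y)) > 0"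
  proof (rule ccontr)
    assume "\<not> (INF y\<in>Y. diameter (fibre X p y)) > 0"
    with X p have "\<forall>\<eta>>0. \<exists>z\<in>Y. thin_fibre X p \<eta> z"
      by (intro thin_fibres_if_INF_diameter_nonpos) auto
    with assms show False using almost_one_to_one_if_thin_fibres by blast
  qed
  show "proximal_factor X T p \<longrightarrow> thickly_sensitive X T"
    using thickly_sensitive_if_proximal_not_thin[OF assms(1,3,5) _ pos]
      not_thin_fibre_INF_diameter[OF X(1) p] by blast
qed

end
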